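(* For every $0<\varepsilon<\frac{\pi^2}{2}$ and every $x\in\mathbb T^d$, $$\frac{1}{(2\pi\varepsilon)^{d/2}}e^{-\frac{\mathrm{dist}(x,0_d)^2}{2\varepsilon}}\le\mathcal K_\varepsilon(x)\le2^{d+1}e^{5d}\cdot\frac{1}{(2\pi\varepsilon)^{d/2}}e^{-\frac{\mathrm{dist}(x,0_d)^2}{2\varepsilon}}.$$
   Context: $\mathbb T^d=\mathbb R^d/2\pi\mathbb Z^d$ with $\mathrm{dist}(x,y)=\min_{k\in\mathbb Z^d}\|x-y-2\pi k\|$, and $\mathcal K_\varepsilon(x)=(2\pi\varepsilon)^{-d/2}\sum_{k\in\mathbb Z^d}e^{-\|x-2\pi k\|^2/(2\varepsilon)}$ is the Gaussian (heat) kernel on $\mathbb T^d$. *)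

theory Defs
  imports "HOL-Analysis.Analysis"
begin

text \<open>Points of the torus are represented by arbitrary representatives in real^'d;
  lattice points 2 pi k, k in Z^d, are parametrised by k :: int^'d.\<close>

definition lattice_pt :: "int ^ 'd \<Rightarrow> real ^ 'd" where
  "lattice_pt k = (\<chi> i. 2 * pi * of_int (k $ i))"

definition torus_dist :: "real ^ 'd \<Rightarrow> real ^ 'd \<Rightarrow> real" where
  "torus_dist x y = Inf (range (\<lambda>k::int ^ 'd. norm (x - y - lattice_pt k)))"

definition heat_kernel :: "real \<Rightarrow> real ^ 'd \<Rightarrow> real" where
  "heat_kernel eps x =
     (2 * pi * eps) powr (- real CARD('d) / 2) *
     infsum (\<lambda>k::int ^ 'd. exp (- (norm (x - lattice_pt k))\<^sup>2 / (2 * eps))) UNIV"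

end

theory Submission
  imports Defs
begin

text \<open>The kernel factorises over the coordinates into one-dimensional periodised Gaussians
  \<Sum>n exp (-(y - 2\<pi>n)^2 / (2\<epsilon>)). Write y = z + 2\<pi>n0 with |z| \<le> \<pi>; then |z| is the distance
  from y to 2\<pi>\<int> and the term of index n0 dominates. Since
  (z - 2\<pi>m)^2 \<ge> z^2 + 4\<pi>^2 (m^2 - |m|) \<ge> z^2 + 2\<epsilon> (|m| - 1) for \<epsilon> \<le> 2\<pi>^2, the term of index
  n0 + m is at most e * exp (-|m|) times the dominant one, and the two-sided geometric series bounds
  each factor by 3e \<le> 9 times its dominant term. The dominant terms multiply to
  exp (-dist(x,0)^2 / (2\<epsilon>)), and 9^d \<le> 2^(d+1) e^(5d).\<close>

lemma has_sum_power_abs_int: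
  fixes q :: real
  assumes "0 \<le> q" "q < 1"
  shows "((\<lambda>m::int. q ^ nat \<bar>m\<bar>) has_sum ((1 + q) / (1 - q))) UNIV"
proof -
  have geom: "((\<lambda>n. q ^ n) has_sum (1 / (1 - q))) UNIV"
    using assms by (intro sums_nonneg_imp_has_sum geometric_sums) auto
  have nonneg: "((\<lambda>m::int. q ^ nat \<bar>m\<bar>) has_sum (1 / (1 - q))) (range int)"
    by (subst has_sum_reindex) (auto simp: o_def geom)
  have "((\<lambda>n. q * q ^ n) has_sum (q * (1 / (1 - q)))) UNIV"
    by (rule has_sum_cmult_right[OF geom])
  then have neg: "((\<lambda>m::int. q ^ nat \<bar>m\<bar>) has_sum (q * (1 / (1 - q)))) (range (\<lambda>n. - int n - 1))"
    by (subst has_sum_reindex) (auto simp: inj_on_def o_def nat_add_distrib)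
  have "range int \<union> range (\<lambda>n. - int n - 1) = (UNIV :: int set)"
  proof -
    have "m \<in> range int" if "0 \<le> m" for m :: int
      using that by (metis nonneg_int_cases rangeI)
    moreover have "m \<in> range (\<lambda>n. - int n - 1)" if "m < 0" for m :: int
      using that by (intro image_eqI[of _ _ "nat (- m - 1)"]) auto
    ultimately show ?thesis by (metis UNIV_eq_I UnI1 UnI2 not_less)
  qed
  with has_sum_Un_disjoint[OF nonneg neg]
  have "((\<lambda>m::int. q ^ nat \<bar>m\<bar>) has_sum (1 / (1 - q) + q * (1 / (1 - q)))) UNIV"
    by fastforce
  with assms show ?thesis by (simp add: field_simps)
qed

definition centered_mod_2pi :: "real \<Rightarrow> real" where
  "centered_mod_2pi y = y - 2 * pi * of_int (round (y / (2 * pi)))"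

lemma abs_centered_mod_2pi_le: "\<bar>centered_mod_2pi y\<bar> \<le> pi"
proof -
  have "\<bar>y / (2 * pi) - of_int (round (y / (2 * pi)))\<bar> \<le> 1 / 2"
    using of_int_round_ge[of "y / (2 * pi)"] of_int_round_le[of "y / (2 * pi)"] by linarith
  then have "\<bar>2 * pi\<bar> * \<bar>y / (2 * pi) - of_int (round (y / (2 * pi)))\<bar> \<le> pi"
    by (simp add: field_simps)
  then have "\<bar>2 * pi * (y / (2 * pi) - of_int (round (y / (2 * pi))))\<bar> \<le> pi"
    by (simp only: abs_mult)
  then show ?thesis
    by (simp add: centered_mod_2pi_def right_diff_distrib)
qed

lemma centered_mod_2pi_shift:
  "y - 2 * pi * of_int n = centered_mod_2pi y - 2 * pi * of_int (n - round (y / (2 * pi)))"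
  by (simp add: centered_mod_2pi_def algebra_simps)

lemma int_square_minus_abs_ge:
  fixes m :: int
  shows "0 \<le> real_of_int m ^ 2 - \<bar>real_of_int m\<bar>"
    and "\<bar>real_of_int m\<bar> - 1 \<le> real_of_int m ^ 2 - \<bar>real_of_int m\<bar>"
proof -
  have "m = 0 \<or> 1 \<le> \<bar>real_of_int m\<bar>" by linarith
  then have "\<bar>real_of_int m\<bar> \<le> \<bar>real_of_int m\<bar> * \<bar>real_of_int m\<bar>"
    using mult_right_mono[of 1 "\<bar>real_of_int m\<bar>" "\<bar>real_of_int m\<bar>"] by auto
  then show "0 \<le> real_of_int m ^ 2 - \<bar>real_of_int m\<bar>"
    by (simp add: power2_eq_square abs_mult_self_eq)
  have "0 \<le> (\<bar>real_of_int m\<bar> - 1)\<^sup>2" by simp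
  then show "\<bar>real_of_int m\<bar> - 1 \<le> real_of_int m ^ 2 - \<bar>real_of_int m\<bar>"
    by (simp add: power2_eq_square algebra_simps)
qed

lemma square_sub_2pi_mult_ge:
  fixes z :: real and m :: int
  assumes "\<bar>z\<bar> \<le> pi"
  shows "z\<^sup>2 + 4 * pi\<^sup>2 * (real_of_int m ^ 2 - \<bar>real_of_int m\<bar>) \<le> (z - 2 * pi * m)\<^sup>2"
proof -
  have "m * z \<le> \<bar>m\<bar> * pi"
    using abs_ge_self[of "m * z"] mult_left_mono[OF assms abs_ge_zero[of "real_of_int m"]]
    by (simp add: abs_mult)
  then have "4 * pi * (m * z) \<le> 4 * pi * (\<bar>m\<bar> * pi)"
    by simp
  then show ?thesis
    by (simp add: power2_eq_square algebra_simps)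
qed

lemma centered_mod_2pi_square_le: "(centered_mod_2pi y)\<^sup>2 \<le> (y - 2 * pi * of_int n)\<^sup>2"
  using square_sub_2pi_mult_ge[OF abs_centered_mod_2pi_le, of y "n - round (y / (2 * pi))"]
    int_square_minus_abs_ge(1)[of "n - round (y / (2 * pi))"]
  unfolding centered_mod_2pi_shift[of y n] by (smt (verit) mult_nonneg_nonneg zero_le_power2)

lemma has_sum_exp_neg_abs_int_shift:
  "((\<lambda>n::int. exp (-1) ^ nat \<bar>n - c\<bar>) has_sum ((1 + exp (-1)) / (1 - exp (-1 :: real)))) UNIV"
proof -
  have "bij_betw (\<lambda>n::int. n - c) UNIV UNIV"
    by (rule bij_betwI[where g = "\<lambda>n. n + c"]) auto
  from has_sum_reindex_bij_betw[OF this, of "\<lambda>m. exp (-1) ^ nat \<bar>m\<bar>"]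
    has_sum_power_abs_int[of "exp (-1)"]
  show ?thesis by auto
qed

lemma exp_neg_one_two_sided_geometric_le: "(1 + exp (-1)) / (1 - exp (-1 :: real)) \<le> 3"
proof -
  have "2 \<le> exp (1 :: real)"
    using exp_ge_add_one_self[of 1] by simp
  then have "exp (-1 :: real) \<le> 1 / 2"
    by (simp add: exp_minus field_simps)
  then show ?thesis
    by (simp add: field_simps)
qed

definition periodic_gaussian :: "real \<Rightarrow> real \<Rightarrow> real" where
  "periodic_gaussian eps y = infsum (\<lambda>n::int. exp (- (y - 2 * pi * of_int n)\<^sup>2 / (2 * eps))) UNIV"

lemma gaussian_term_le:
  assumes "0 < eps" "eps \<le> 2 * pi\<^sup>2"
  shows "exp (- (y - 2 * pi * of_int n)\<^sup>2 / (2 * eps))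
    \<le> exp 1 * exp (- (centered_mod_2pi y)\<^sup>2 / (2 * eps)) * exp (-1) ^ nat \<bar>n - round (y / (2 * pi))\<bar>"
proof -
  define m where "m = n - round (y / (2 * pi))"
  define z where "z = centered_mod_2pi y"
  have "2 * eps * (\<bar>real_of_int m\<bar> - 1) \<le> 2 * eps * (real_of_int m ^ 2 - \<bar>real_of_int m\<bar>)"
    using int_square_minus_abs_ge(2)[of m] assms by simp
  also have "\<dots> \<le> 4 * pi\<^sup>2 * (real_of_int m ^ 2 - \<bar>real_of_int m\<bar>)"
    using int_square_minus_abs_ge(1)[of m] assms by (intro mult_right_mono) auto
  finally have "z\<^sup>2 + 2 * eps * (\<bar>real_of_int m\<bar> - 1) \<le> (y - 2 * pi * of_int n)\<^sup>2"
    using square_sub_2pi_mult_ge[OF abs_centered_mod_2pi_le, of y m]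
    unfolding centered_mod_2pi_shift[of y n] m_def z_def by linarith
  then have "- (y - 2 * pi * of_int n)\<^sup>2 / (2 * eps) \<le> 1 + - z\<^sup>2 / (2 * eps) + real (nat \<bar>m\<bar>) * -1"
    using assms by (simp add: field_simps)
  then have "exp (- (y - 2 * pi * of_int n)\<^sup>2 / (2 * eps))
      \<le> exp (1 + - z\<^sup>2 / (2 * eps) + real (nat \<bar>m\<bar>) * -1)"
    by simp
  also have "\<dots> = exp 1 * exp (- z\<^sup>2 / (2 * eps)) * exp (-1) ^ nat \<bar>m\<bar>"
    by (simp only: exp_add exp_of_nat_mult)
  finally show ?thesis
    unfolding m_def z_def .
qed

lemma has_sum_gaussian_majorant:
  "((\<lambda>n::int. exp 1 * exp (- (centered_mod_2pi y)\<^sup>2 / (2 * eps)) * exp (-1) ^ nat \<bar>n - round (y / (2 * pi))\<bar>)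
     has_sum (exp 1 * exp (- (centered_mod_2pi y)\<^sup>2 / (2 * eps)) * ((1 + exp (-1)) / (1 - exp (-1))))) UNIV"
  by (rule has_sum_cmult_right[OF has_sum_exp_neg_abs_int_shift])

lemma periodic_gaussian_summable:
  assumes "0 < eps" "eps \<le> 2 * pi\<^sup>2"
  shows "(\<lambda>n::int. exp (- (y - 2 * pi * of_int n)\<^sup>2 / (2 * eps))) summable_on UNIV"
  using has_sum_imp_summable[OF has_sum_gaussian_majorant[where y = y and eps = eps]]
  by (rule summable_on_comparison_test) (use gaussian_term_le[OF assms] in auto)

lemma periodic_gaussian_ge:
  assumes "0 < eps" "eps \<le> 2 * pi\<^sup>2"
  shows "exp (- (centered_mod_2pi y)\<^sup>2 / (2 * eps)) \<le> periodic_gaussian eps y"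
proof -
  have "(\<Sum>n\<in>{round (y / (2 * pi))}. exp (- (y - 2 * pi * of_int n)\<^sup>2 / (2 * eps)))
      \<le> periodic_gaussian eps y"
    unfolding periodic_gaussian_def
    using periodic_gaussian_summable[OF assms, of y]
    by (intro finite_sum_le_infsum) auto
  then show ?thesis
    by (simp add: centered_mod_2pi_def)
qed

lemma periodic_gaussian_le:
  assumes "0 < eps" "eps \<le> 2 * pi\<^sup>2"
  shows "periodic_gaussian eps y \<le> 9 * exp (- (centered_mod_2pi y)\<^sup>2 / (2 * eps))"
proof -
  define E where "E = exp (- (centered_mod_2pi y)\<^sup>2 / (2 * eps))"
  have "periodic_gaussian eps y \<le> exp 1 * E * ((1 + exp (-1)) / (1 - exp (-1)))"
    unfolding periodic_gaussian_def E_def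
    using periodic_gaussian_summable[OF assms, of y] gaussian_term_le[OF assms, of y]
    by (intro has_sum_mono[OF has_sum_infsum has_sum_gaussian_majorant]) auto
  also have "\<dots> \<le> 3 * E * 3"
    using exp_le exp_neg_one_two_sided_geometric_le
    by (intro mult_mono) (auto simp: E_def)
  finally show ?thesis
    by (simp add: E_def)
qed

lemma infsum_prod_vec_nth:
  fixes f :: "'d::finite \<Rightarrow> 'b \<Rightarrow> 'c::{banach, real_normed_div_algebra, comm_semiring_1}"
  assumes "\<And>i. (\<lambda>n. norm (f i n)) summable_on UNIV"
  shows "infsum (\<lambda>k::'b ^ 'd. \<Prod>i\<in>UNIV. f i (k $ i)) UNIV = (\<Prod>i\<in>UNIV. infsum (f i) UNIV)"
proof -
  have "bij_betw vec_lambda (PiE UNIV (\<lambda>_::'d. UNIV :: 'b set)) UNIV"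
    unfolding PiE_UNIV by (rule bij_betwI[where g = vec_nth]) auto
  then have "infsum (\<lambda>k::'b ^ 'd. \<Prod>i\<in>UNIV. f i (k $ i)) UNIV
      = infsum (\<lambda>g. \<Prod>i\<in>UNIV. f i (g i)) (PiE UNIV (\<lambda>_. UNIV))"
    by (subst infsum_reindex_bij_betw[symmetric]) auto
  also have "\<dots> = (\<Prod>i\<in>UNIV. infsum (f i) UNIV)"
    using assms by (intro infsum_prod_PiE_abs) auto
  finally show ?thesis .
qed

lemma norm_sub_lattice_pt_square:
  "(norm (x - lattice_pt k))\<^sup>2 = (\<Sum>i\<in>UNIV. (x $ i - 2 * pi * of_int (k $ i))\<^sup>2)"
  by (simp add: norm_vec_def L2_set_def sum_nonneg lattice_pt_def)

lemma exp_neg_sum_divide: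
  fixes f :: "'a \<Rightarrow> real"
  assumes "finite A"
  shows "exp (- (\<Sum>i\<in>A. f i) / c) = (\<Prod>i\<in>A. exp (- f i / c))"
proof -
  have "- (\<Sum>i\<in>A. f i) / c = (\<Sum>i\<in>A. - f i / c)"
    by (simp add: sum_divide_distrib sum_negf)
  with assms show ?thesis
    by (simp add: exp_sum)
qed

lemma heat_kernel_eq_prod_periodic_gaussian:
  fixes x :: "real ^ 'd"
  assumes "0 < eps" "eps \<le> 2 * pi\<^sup>2"
  shows "heat_kernel eps x
    = (2 * pi * eps) powr (- real CARD('d) / 2) * (\<Prod>i\<in>UNIV. periodic_gaussian eps (x $ i))"
  unfolding heat_kernel_def periodic_gaussian_def norm_sub_lattice_pt_square exp_neg_sum_divide[OF finite]
  using periodic_gaussian_summable[OF assms]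
  by (subst infsum_prod_vec_nth[where f = "\<lambda>i n. exp (- (x $ i - 2 * pi * of_int n)\<^sup>2 / (2 * eps))"]) auto

lemma torus_dist_zero_square:
  fixes x :: "real ^ 'd"
  shows "(torus_dist x 0)\<^sup>2 = (\<Sum>i\<in>UNIV. (centered_mod_2pi (x $ i))\<^sup>2)"
proof -
  define k\<^sub>0 :: "int ^ 'd" where "k\<^sub>0 = (\<chi> i. round (x $ i / (2 * pi)))"
  have nearest: "(norm (x - lattice_pt k\<^sub>0))\<^sup>2 = (\<Sum>i\<in>UNIV. (centered_mod_2pi (x $ i))\<^sup>2)"
    by (simp add: norm_sub_lattice_pt_square k\<^sub>0_def centered_mod_2pi_def)
  have "(norm (x - lattice_pt k\<^sub>0))\<^sup>2 \<le> (norm (x - lattice_pt k))\<^sup>2" for k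
    unfolding nearest unfolding norm_sub_lattice_pt_square
    by (intro sum_mono centered_mod_2pi_square_le)
  then have "norm (x - lattice_pt k\<^sub>0) \<le> norm (x - lattice_pt k)" for k
    by (simp add: power2_le_iff_abs_le)
  then have "torus_dist x 0 = norm (x - lattice_pt k\<^sub>0)"
    unfolding torus_dist_def by (intro cInf_eq_minimum) auto
  with nearest show ?thesis
    by simp
qed

lemma nine_power_le: "(9 :: real) ^ n \<le> 2 ^ (n + 1) * exp (5 * real n)"
proof -
  have "(9 :: real) ^ n \<le> (2 * exp 5) ^ n"
    using exp_ge_add_one_self[of "5 :: real"] by (intro power_mono) auto
  also have "\<dots> = 2 ^ n * exp (5 * real n)"
    by (simp add: power_mult_distrib exp_of_nat_mult[symmetric] mult.commute)
  also have "\<dots> \<le> 2 ^ (n + 1) * exp (5 * real n)"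
    by simp
  finally show ?thesis .
qed

theorem propositionC1:
  fixes eps :: real and x :: "real ^ 'd"
  assumes "0 < eps" and "eps < pi\<^sup>2 / 2"
  shows "1 / (2 * pi * eps) powr (real CARD('d) / 2) * exp (- (torus_dist x 0)\<^sup>2 / (2 * eps))
           \<le> heat_kernel eps x
       \<and> heat_kernel eps x
           \<le> 2 ^ (CARD('d) + 1) * exp (5 * real CARD('d)) *
              (1 / (2 * pi * eps) powr (real CARD('d) / 2) * exp (- (torus_dist x 0)\<^sup>2 / (2 * eps)))"
proof -
  have eps: "0 < eps" "eps \<le> 2 * pi\<^sup>2"
    using assms by auto
  define P where "P = 1 / (2 * pi * eps) powr (real CARD('d) / 2)"
  define S where "S i = periodic_gaussian eps (x $ i)" for i
  define E where "E i = exp (- (centered_mod_2pi (x $ i))\<^sup>2 / (2 * eps))" for i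
  have kernel: "heat_kernel eps x = P * (\<Prod>i\<in>UNIV. S i)"
    unfolding heat_kernel_eq_prod_periodic_gaussian[OF eps] P_def S_def
    by (simp add: powr_minus_divide)
  have gaussian: "exp (- (torus_dist x 0)\<^sup>2 / (2 * eps)) = (\<Prod>i\<in>UNIV. E i)"
    unfolding torus_dist_zero_square E_def by (rule exp_neg_sum_divide[OF finite])
  have E_le_S: "0 \<le> E i \<and> E i \<le> S i" for i
    using periodic_gaussian_ge[OF eps] by (simp add: E_def S_def)
  have lower: "(\<Prod>i\<in>UNIV. E i) \<le> (\<Prod>i\<in>UNIV. S i)"
    using E_le_S by (intro prod_mono) auto
  have S_le: "S i \<le> 9 * E i" for i
    unfolding S_def E_def by (rule periodic_gaussian_le[OF eps])
  have "(\<Prod>i\<in>UNIV. S i) \<le> (\<Prod>i\<in>UNIV. 9 * E i)"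
    using E_le_S S_le by (intro prod_mono) (meson order_trans)
  also have "\<dots> = 9 ^ CARD('d) * (\<Prod>i\<in>UNIV. E i)"
    by (simp add: prod.distrib)
  also have "\<dots> \<le> 2 ^ (CARD('d) + 1) * exp (5 * real CARD('d)) * (\<Prod>i\<in>UNIV. E i)"
    using nine_power_le E_le_S by (intro mult_right_mono prod_nonneg) auto
  finally have upper: "(\<Prod>i\<in>UNIV. S i) \<le> 2 ^ (CARD('d) + 1) * exp (5 * real CARD('d)) * (\<Prod>i\<in>UNIV. E i)" .
  have "0 \<le> P"
    by (simp add: P_def)
  with lower upper show ?thesis
    unfolding kernel gaussian P_def[symmetric]
    by (auto dest: mult_left_mono[of _ _ P] simp: ac_simps)
qed

end
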